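(* Let $G=(V,E)$ be a finite simple undirected graph, $G_0:=G$, and let $W_1,\dots,W_r$ be distinct subsets of $V$ such that for every $t\in\{1,\dots,r\}$, $W_t$ is a clique of $G_{t-1}$ with $|W_t|\ge2$ and $G_t:=G_{t-1}\mid W_t$. Let $F_0:=STAB(G)$, $F_t:=\{x\in STAB(G)\mid x_{W_j}=1,\ j=1,\dots,t\}$, and $\mathcal S_t:=\mathcal S(G)\cap F_t$. Let $c^\top x\le d$, with $c\in\mathbb R^V$ and $d\in\mathbb R$, be a valid inequality for $STAB(G_r)$. For $t\in\{0,\dots,r\}$ define \[ f_t(x)=c^\top x+\sum_{\ell=t+1}^r\lambda^S_\ell(x_{W_\ell}-1), \] where, recursively for $\ell=r,r-1,\dots,1$, \[ \lambda^S_\ell=\max\{f_\ell(x)-d\mid x\in\mathcal S_{\ell-1},\ x_{W_\ell}=0\}, \] with the convention $\max\emptyset=0$. Then $f_t(x)\le d$ is valid for $F_t$ for every $t\in\{0,\dots,r\}$.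
   Context: For a graph $G=(V,E)$, $\mathcal S(G)\subseteq\{0,1\}^V$ is the set of characteristic vectors of stable sets of $G$, and $STAB(G)=\mathrm{conv}\,\mathcal S(G)$. For $W\subseteq V$ and $x\in\mathbb R^V$, $x_W=\sum_{v\in W}x_v$. The clique projection of a clique $W$ ($|W|\ge2$) of a graph $H=(V,E_H)$ is $H\mid W=(V,E_H\cup\{uv\notin E_H\mid u\ne v,\ W\subseteq N_H(u)\cup N_H(v)\})$, where $N_H(u)$ is the neighborhood of $u$ in $H$. *)

theory Defs
  imports "HOL-Analysis.Analysis"
begin

text \<open>Finite simple graphs on the vertex set V = UNIV of a finite type 'v.
  The edge set is a set of 2-element vertex sets.\<close>

definition simple_graph :: "'v set set \<Rightarrow> bool" where
  "simple_graph E \<longleftrightarrow> (\<forall>e\<in>E. card e = 2)"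

definition nbhd :: "'v set set \<Rightarrow> 'v \<Rightarrow> 'v set" where
  "nbhd E u = {v. {u, v} \<in> E}"

definition is_clique :: "'v set set \<Rightarrow> 'v set \<Rightarrow> bool" where
  "is_clique E W \<longleftrightarrow> (\<forall>u\<in>W. \<forall>v\<in>W. u \<noteq> v \<longrightarrow> {u, v} \<in> E)"

definition is_stable :: "'v set set \<Rightarrow> 'v set \<Rightarrow> bool" where
  "is_stable E S \<longleftrightarrow> (\<forall>u\<in>S. \<forall>v\<in>S. {u, v} \<notin> E)"

definition clique_proj :: "'v set set \<Rightarrow> 'v set \<Rightarrow> 'v set set" where
  "clique_proj E W = E \<union> {{u, v} | u v. {u, v} \<notin> E \<and> u \<noteq> v \<and> W \<subseteq> nbhd E u \<union> nbhd E v}"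

definition char_vec :: "'v::finite set \<Rightarrow> real ^ 'v" where
  "char_vec S = (\<chi> v. if v \<in> S then 1 else 0)"

definition stab_vecs :: "'v::finite set set \<Rightarrow> (real ^ 'v) set" where
  "stab_vecs E = {char_vec S | S. is_stable E S}"

definition STAB :: "'v::finite set set \<Rightarrow> (real ^ 'v) set" where
  "STAB E = convex hull (stab_vecs E)"

definition xsum :: "'v::finite set \<Rightarrow> real ^ 'v \<Rightarrow> real" where
  "xsum W x = (\<Sum>v\<in>W. x $ v)"

primrec Gseq :: "'v set set \<Rightarrow> (nat \<Rightarrow> 'v set) \<Rightarrow> nat \<Rightarrow> 'v set set" where
  "Gseq E W 0 = E"
| "Gseq E W (Suc t) = clique_proj (Gseq E W t) (W (Suc t))"

definition Fset :: "'v::finite set set \<Rightarrow> (nat \<Rightarrow> 'v set) \<Rightarrow> nat \<Rightarrow> (real ^ 'v) set" where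
  "Fset E W t = {x \<in> STAB E. \<forall>j\<in>{1..t}. xsum (W j) x = 1}"

definition Sset :: "'v::finite set set \<Rightarrow> (nat \<Rightarrow> 'v set) \<Rightarrow> nat \<Rightarrow> (real ^ 'v) set" where
  "Sset E W t = stab_vecs E \<inter> Fset E W t"

definition max0 :: "real set \<Rightarrow> real" where
  "max0 A = (if A = {} then 0 else Max A)"

definition fval :: "(nat \<Rightarrow> 'v set) \<Rightarrow> nat \<Rightarrow> real ^ 'v \<Rightarrow> (nat \<Rightarrow> real) \<Rightarrow> nat \<Rightarrow> real ^ 'v \<Rightarrow> real"
  where "fval W r c lam t x = c \<bullet> x + (\<Sum>l\<in>{t+1..r}. lam l * (xsum (W l) x - 1))"

text \<open>Recursive computation of lambda^S_l for l = r, r-1, ..., 1: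
  after n steps, the values lambda^S_r, ..., lambda^S_{r-n+1} are set.\<close>
primrec lam_steps :: "'v::finite set set \<Rightarrow> (nat \<Rightarrow> 'v set) \<Rightarrow> nat \<Rightarrow> real ^ 'v \<Rightarrow> real
    \<Rightarrow> nat \<Rightarrow> (nat \<Rightarrow> real)" where
  "lam_steps E W r c d 0 = (\<lambda>_. 0)"
| "lam_steps E W r c d (Suc n) =
     (let L = lam_steps E W r c d n; l = r - n in
       L(l := max0 {fval W r c L l x - d | x. x \<in> Sset E W (l - 1) \<and> xsum (W l) x = 0}))"

text \<open>lambda^S_l (meaningful for 1 \<le> l \<le> r).\<close>
definition lamS :: "'v::finite set set \<Rightarrow> (nat \<Rightarrow> 'v set) \<Rightarrow> nat \<Rightarrow> real ^ 'v \<Rightarrow> real \<Rightarrow> nat \<Rightarrow> real"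
  where "lamS E W r c d = lam_steps E W r c d r"

end

theory Submission
  imports Defs
begin

text \<open>Two facts drive the proof. First, F_t is the convex hull of \<S>_t: the clique inequality
  x_{W_{t+1}} \<le> 1 is valid for \<S>_t (whose members are stable in G_t), so F_{t+1} is a face of
  conv \<S>_t spanned by the points of \<S>_t on it. Second, f_{t-1} is affine, so its validity on F_{t-1}
  only has to be checked at the 0/1 points of \<S>_{t-1}; those with x_{W_t} = 1 lie in F_t, where
  f_{t-1} = f_t, and those with x_{W_t} = 0 are exactly the points that \<lambda>^S_t is chosen to cover.
  Validity of c x \<le> d on F_r holds because \<S>_r consists of stable sets of G_r.\<close>

lemma convex_hull_supporting_face:
  fixes P :: "'a::euclidean_space set"
  assumes "finite P" and "\<forall>p\<in>P. a \<bullet> p \<le> b" and "x \<in> convex hull P" and "a \<bullet> x = b"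
  shows "x \<in> convex hull {p\<in>P. a \<bullet> p = b}"
proof -
  have "convex hull P \<subseteq> {y. a \<bullet> y \<le> b}"
    using assms(2) by (intro hull_minimal convex_halfspace_le) auto
  then have "(convex hull P \<inter> {y. a \<bullet> y = b}) face_of convex hull P"
    by (intro face_of_Int_supporting_hyperplane_le) auto
  then obtain P' where P': "P' \<subseteq> P" "convex hull P \<inter> {y. a \<bullet> y = b} = convex hull P'"
    using face_of_convex_hull_subset finite_imp_compact assms(1) by metis
  have "P' \<subseteq> {p\<in>P. a \<bullet> p = b}"
    using P' hull_subset[of P' convex] by auto
  then show ?thesis
    using P' assms(3,4) hull_mono by blast
qed

lemma is_stable_clique_proj:
  assumes "is_stable H S" and "W \<inter> S \<noteq> {}"
  shows "is_stable (clique_proj H W) S"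
  unfolding is_stable_def
proof (intro ballI)
  fix u v assume uv: "u \<in> S" "v \<in> S"
  obtain w where w: "w \<in> W" "w \<in> S" using assms(2) by blast
  have "{u', w} \<notin> H" "{v', w} \<notin> H" if "{u, v} = {u', v'}" for u' v'
    using that assms(1) uv w unfolding is_stable_def doubleton_eq_iff by auto
  then have "\<not> W \<subseteq> nbhd H u' \<union> nbhd H v'" if "{u, v} = {u', v'}" for u' v'
    using that w unfolding nbhd_def by blast
  moreover have "{u, v} \<notin> H" using assms(1) uv unfolding is_stable_def by blast
  ultimately show "{u, v} \<notin> clique_proj H W"
    unfolding clique_proj_def by blast
qed

lemma card_clique_Int_stable_le_1:
  fixes W :: "'v::finite set"
  assumes "is_stable H S" and "is_clique H W"
  shows "card (W \<inter> S) \<le> 1"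
proof -
  have "\<forall>a\<in>W \<inter> S. \<forall>b\<in>W \<inter> S. a = b"
    using assms unfolding is_stable_def is_clique_def by blast
  then show ?thesis using card_le_Suc0_iff_eq[of "W \<inter> S"] by simp
qed

lemma xsum_char_vec: "xsum W (char_vec S) = real (card (W \<inter> S))"
  unfolding xsum_def char_vec_def by (simp add: sum.If_cases Int_def)

lemma xsum_eq_inner: "xsum W x = char_vec W \<bullet> x"
proof -
  have "char_vec W \<bullet> x = (\<Sum>v\<in>UNIV. if v \<in> W then x $ v else 0)"
    unfolding char_vec_def inner_vec_def by (intro sum.cong) auto
  then show ?thesis unfolding xsum_def by (simp add: sum.If_cases)
qed

lemma finite_stab_vecs: "finite (stab_vecs (E :: 'v::finite set set))"
  by (rule finite_subset[of _ "range char_vec"]) (auto simp: stab_vecs_def)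

lemma Fset_Suc: "Fset E W (Suc t) = {x \<in> Fset E W t. xsum (W (Suc t)) x = 1}"
  unfolding Fset_def by (auto simp: le_Suc_eq)

lemma Sset_Suc: "Sset E W (Suc t) = {s \<in> Sset E W t. xsum (W (Suc t)) s = 1}"
  unfolding Sset_def Fset_Suc by blast

lemma Sset_stable_Gseq:
  assumes "s \<in> Sset E W t"
  obtains S where "s = char_vec S" and "is_stable (Gseq E W t) S"
  using assms
proof (induction t arbitrary: thesis)
  case 0
  then show ?case unfolding Sset_def stab_vecs_def by auto
next
  case (Suc t)
  then obtain S where S: "s = char_vec S" "is_stable (Gseq E W t) S"
    by (auto simp: Sset_Suc)
  with Suc.prems have "card (W (Suc t) \<inter> S) = 1"
    by (simp add: Sset_Suc xsum_char_vec)
  then have "W (Suc t) \<inter> S \<noteq> {}" by force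
  with S Suc.prems(1) show ?case by (simp add: is_stable_clique_proj)
qed

lemma xsum_Sset_le_1:
  assumes "s \<in> Sset E W t" and "is_clique (Gseq E W t) (W (Suc t))"
  shows "xsum (W (Suc t)) s \<le> 1"
proof -
  obtain S where "s = char_vec S" "is_stable (Gseq E W t) S"
    using Sset_stable_Gseq[OF assms(1)] .
  with assms(2) show ?thesis
    using card_clique_Int_stable_le_1 by (simp add: xsum_char_vec)
qed

lemma Fset_subset_convex_hull_Sset:
  assumes "\<forall>j\<in>{1..t}. is_clique (Gseq E W (j - 1)) (W j)"
  shows "Fset E W t \<subseteq> convex hull (Sset E W t)"
  using assms
proof (induction t)
  case 0
  then show ?case by (simp add: Fset_def Sset_def STAB_def hull_subset Int_absorb2)
next
  case (Suc t)
  show ?case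
  proof
    fix x assume x: "x \<in> Fset E W (Suc t)"
    have "x \<in> convex hull (Sset E W t)"
      using Suc x by (auto simp: Fset_Suc)
    moreover have "finite (Sset E W t)"
      unfolding Sset_def using finite_stab_vecs by blast
    moreover have "\<forall>s\<in>Sset E W t. xsum (W (Suc t)) s \<le> 1"
      using Suc.prems xsum_Sset_le_1 by force
    ultimately show "x \<in> convex hull (Sset E W (Suc t))"
      using convex_hull_supporting_face[of "Sset E W t" "char_vec (W (Suc t))" 1 x] x
      by (simp add: Fset_Suc Sset_Suc xsum_eq_inner)
  qed
qed

lemma fval_eq_inner:
  "fval W r c L t x = (c + (\<Sum>l\<in>{t+1..r}. L l *\<^sub>R char_vec (W l))) \<bullet> x - (\<Sum>l\<in>{t+1..r}. L l)"
  unfolding fval_def xsum_eq_inner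
  by (simp add: inner_add_left inner_sum_left right_diff_distrib sum_subtractf)

lemma convex_fval_sublevel: "convex {x. fval W r c L t x \<le> d}"
  unfolding fval_eq_inner diff_le_eq by (rule convex_halfspace_le)

lemma fval_Suc:
  assumes "t < r"
  shows "fval W r c L t x = fval W r c L (Suc t) x + L (Suc t) * (xsum (W (Suc t)) x - 1)"
  using assms unfolding fval_def by (simp add: sum.atLeast_Suc_atMost)

lemma fval_cong:
  assumes "\<forall>l\<in>{t+1..r}. L l = L' l"
  shows "fval W r c L t x = fval W r c L' t x"
  using assms unfolding fval_def by simp

lemma valid_on_Fset_of_valid_on_Sset:
  assumes "\<forall>j\<in>{1..t}. is_clique (Gseq E W (j - 1)) (W j)"
    and "\<forall>s\<in>Sset E W t. fval W r c L t s \<le> d"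
  shows "\<forall>x\<in>Fset E W t. fval W r c L t x \<le> d"
proof -
  have "convex hull (Sset E W t) \<subseteq> {x. fval W r c L t x \<le> d}"
    using assms(2) by (intro hull_minimal convex_fval_sublevel) auto
  then show ?thesis
    using Fset_subset_convex_hull_Sset[OF assms(1)] by blast
qed

text \<open>lam_steps (Suc n) fixes the coefficient of index r - n; later steps leave it unchanged.\<close>

lemma lam_steps_settled:
  assumes "n \<le> m" and "r - n < k"
  shows "lam_steps E W r c d m k = lam_steps E W r c d n k"
  using assms
proof (induction m)
  case (Suc m)
  show ?case
  proof (cases "n = Suc m")
    case False
    with Suc.prems have "n \<le> m" and "k \<noteq> r - m" by auto
    with Suc.IH Suc.prems(2) show ?thesis by (simp add: Let_def)
  qed simp
qed simp

lemma lamS_rec: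
  assumes "t < r"
  shows "lamS E W r c d (Suc t) = max0 {fval W r c (lamS E W r c d) (Suc t) x - d | x.
           x \<in> Sset E W t \<and> xsum (W (Suc t)) x = 0}"
proof -
  define n where "n = r - Suc t"
  have n: "r - n = Suc t" "n < r" using assms unfolding n_def by auto
  let ?L = "lam_steps E W r c d n"
  have "lamS E W r c d (Suc t) = lam_steps E W r c d (Suc n) (Suc t)"
    unfolding lamS_def using n by (intro lam_steps_settled) auto
  also have "\<dots> = max0 {fval W r c ?L (Suc t) x - d | x. x \<in> Sset E W t \<and> xsum (W (Suc t)) x = 0}"
    using n by (simp add: Let_def)
  also have "fval W r c ?L (Suc t) = fval W r c (lamS E W r c d) (Suc t)"
    unfolding lamS_def using n by (intro ext fval_cong ballI lam_steps_settled[symmetric]) auto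
  finally show ?thesis .
qed

lemma le_max0: "finite A \<Longrightarrow> a \<in> A \<Longrightarrow> a \<le> max0 A"
  unfolding max0_def by auto

lemma valid_on_Sset_of_valid_on_Fset_Suc:
  assumes "t < r" and "is_clique (Gseq E W t) (W (Suc t))"
    and valid: "\<forall>x\<in>Fset E W (Suc t). fval W r c (lamS E W r c d) (Suc t) x \<le> d"
    and s: "s \<in> Sset E W t"
  shows "fval W r c (lamS E W r c d) t s \<le> d"
proof -
  let ?L = "lamS E W r c d" and ?f = "fval W r c (lamS E W r c d) (Suc t)"
  obtain S where S: "s = char_vec S" "is_stable (Gseq E W t) S"
    using Sset_stable_Gseq[OF s] .
  have "card (W (Suc t) \<inter> S) \<le> 1"
    using card_clique_Int_stable_le_1[OF S(2) assms(2)] .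
  then have "card (W (Suc t) \<inter> S) = 1 \<or> card (W (Suc t) \<inter> S) = 0" by linarith
  then consider (meets) "xsum (W (Suc t)) s = 1" | (misses) "xsum (W (Suc t)) s = 0"
    using S(1) by (auto simp: xsum_char_vec)
  then show ?thesis
  proof cases
    case meets
    then have "s \<in> Sset E W (Suc t)" using s by (simp add: Sset_Suc)
    then have "?f s \<le> d" using valid by (auto simp: Sset_def)
    with meets show ?thesis using assms(1) by (simp add: fval_Suc)
  next
    case misses
    let ?A = "{?f x - d | x. x \<in> Sset E W t \<and> xsum (W (Suc t)) x = 0}"
    have "?A \<subseteq> (\<lambda>x. ?f x - d) ` stab_vecs E" by (auto simp: Sset_def)
    then have "finite ?A" using finite_stab_vecs finite_surj by blast
    then have "?f s - d \<le> max0 ?A" using s misses by (blast intro: le_max0)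
    also have "\<dots> = ?L (Suc t)"
      using lamS_rec[OF assms(1)] by (rule sym)
    finally show ?thesis using misses assms(1) by (simp add: fval_Suc)
  qed
qed

theorem lemma6:
  fixes E :: "'v::finite set set" and W :: "nat \<Rightarrow> 'v set" and r :: nat
    and c :: "real ^ 'v" and d :: real
  assumes "simple_graph E"
    and "inj_on W {1..r}"
    and "\<forall>t\<in>{1..r}. is_clique (Gseq E W (t - 1)) (W t) \<and> card (W t) \<ge> 2"
    and "\<forall>x\<in>STAB (Gseq E W r). c \<bullet> x \<le> d"
  shows "\<forall>t\<in>{0..r}. \<forall>x\<in>Fset E W t. fval W r c (lamS E W r c d) t x \<le> d"
proof
  let ?f = "fval W r c (lamS E W r c d)"
  fix t assume "t \<in> {0..r}"
  then have "t \<le> r" by simp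
  have cliques: "\<forall>j\<in>{1..t}. is_clique (Gseq E W (j - 1)) (W j)" if "t \<le> r" for t
    using assms(3) that by auto
  from \<open>t \<le> r\<close> show "\<forall>x\<in>Fset E W t. ?f t x \<le> d"
  proof (induction t rule: inc_induct)
    case base
    have "s \<in> STAB (Gseq E W r)" if "s \<in> Sset E W r" for s
      using that by (auto elim!: Sset_stable_Gseq simp: STAB_def stab_vecs_def intro: hull_inc)
    then have "\<forall>s\<in>Sset E W r. ?f r s \<le> d"
      using assms(4) by (simp add: fval_def)
    then show ?case
      using valid_on_Fset_of_valid_on_Sset[OF cliques[OF order_refl]] by blast
  next
    case (step t)
    have "Suc t \<in> {1..r}" using step.hyps(2) by simp
    with assms(3) have "is_clique (Gseq E W t) (W (Suc t))" by fastforce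
    then have "\<forall>s\<in>Sset E W t. ?f t s \<le> d"
      using valid_on_Sset_of_valid_on_Fset_Suc[OF step.hyps(2) _ step.IH] by blast
    then show ?case
      using valid_on_Fset_of_valid_on_Sset[OF cliques[OF less_imp_le[OF step.hyps(2)]]] by blast
  qed
qed

end
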